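(* Consider the CTMDP primitives $\{S,A,q,c\}$ described in the context, assume $\bar c(x):=\sup_{a\in A}c(x,a)<\infty$ for all $x\in S$, and let $w$ be a $[1,\infty)$-valued Borel function on $S$ with $w(x)\ge1+\bar c(x)+\bar q_x$ for all $x\in S$. Define the stochastic kernel $\tilde p(dy|x,a):=\frac{q(dy|x,a)}{w(x)}+\delta_{\{x\}}(dy)$ on $\mathcal B(S)$ given $(x,a)\in S\times A$. Then: (a) A $[1,\infty]$-valued lower semianalytic function $V$ on $S$ satisfies $$0=\inf_{a\in A}\left\{c(x,a)V(x)+\int_S q(dy|x,a)V(y)\right\}\qquad(\ast)$$ for each $x\in S$ with $V(x)<\infty$ if and only if $$V(x)=\inf_{a\in A}\left\{\frac{w(x)}{w(x)-c(x,a)}\int_S\tilde p(dy|x,a)V(y)\right\},\quad\forall x\in S.$$ (b) Let $V$ be a $[1,\infty]$-valued lower semianalytic function on $S$ satisfying $(\ast)$ for each $x\in S$ with $V(x)<\infty$. A deterministic stationary policy (measurable map) $\varphi:S\to A$ satisfies $$0=\inf_{a\in A}\left\{c(x,a)V(x)+\int_S q(dy|x,a)V(y)\right\}=c(x,\varphi(x))V(x)+\int_S q(dy|x,\varphi(x))V(y)$$ for each $x\in S$ with $V(x)<\infty$ if and only if $$\inf_{a\in A}\left\{\frac{w(x)}{w(x)-c(x,a)}\int_S\tilde p(dy|x,a)V(y)\right\}=\frac{w(x)}{w(x)-c(x,\varphi(x))}\int_S\tilde p(dy|x,\varphi(x))V(y),\quad\forall x\in S.$$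
   Context: $S$, $A$ are nonempty Borel spaces. The transition rate $q(dy|x,a)$ is a signed kernel on $\mathcal B(S)$ given $(x,a)\in S\times A$ with $q(\Gamma\setminus\{x\}|x,a)\ge0$ for all $\Gamma\in\mathcal B(S)$, $q(S|x,a)=0$, and $\bar q_x:=\sup_{a\in A}q_x(a)<\infty$, where $q_x(a):=-q(\{x\}|x,a)$. The cost rate $c:S\times A\to[0,\infty)$ is measurable. Conventions: $0/0=0$, $0\cdot\infty=0$, $1/0=+\infty$, $\infty-\infty=\infty$. *)

theory Defs
  imports "HOL-Analysis.Analysis"
begin

definition analytic_set :: "'a::topological_space set \<Rightarrow> bool" where
  "analytic_set B \<longleftrightarrow> B = {} \<or> (\<exists>f :: (nat \<Rightarrow> nat) \<Rightarrow> 'a. continuous_on UNIV f \<and> range f = B)"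

definition lower_semianalytic :: "('a::topological_space \<Rightarrow> ennreal) \<Rightarrow> bool" where
  "lower_semianalytic V \<longleftrightarrow> (\<forall>r::real. analytic_set {x. V x < ennreal r})"

definition signed_rate_kernel ::
  "('a::polish_space \<Rightarrow> 'b::polish_space \<Rightarrow> 'a set \<Rightarrow> real) \<Rightarrow> bool" where
  "signed_rate_kernel q \<longleftrightarrow>
     (\<forall>x a. \<forall>F::nat \<Rightarrow> 'a set. range F \<subseteq> sets borel \<longrightarrow> disjoint_family F \<longrightarrow>
          (\<lambda>n. q x a (F n)) sums q x a (\<Union>(range F))) \<and>
     (\<forall>\<Gamma>\<in>sets borel. (\<lambda>(x,a). q x a \<Gamma>) \<in> borel_measurable (borel \<Otimes>\<^sub>M borel)) \<and>
     (\<forall>x a. \<forall>\<Gamma>\<in>sets borel. q x a (\<Gamma> - {x}) \<ge> 0) \<and>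
     (\<forall>x a. q x a UNIV = 0)"

definition qx :: "('a \<Rightarrow> 'b \<Rightarrow> 'a set \<Rightarrow> real) \<Rightarrow> 'a \<Rightarrow> 'b \<Rightarrow> real" where
  "qx q x a = - q x a {x}"

definition qplus :: "('a::polish_space \<Rightarrow> 'b \<Rightarrow> 'a set \<Rightarrow> real) \<Rightarrow> 'a \<Rightarrow> 'b \<Rightarrow> 'a measure" where
  "qplus q x a = measure_of UNIV (sets borel) (\<lambda>\<Gamma>. ennreal (q x a (\<Gamma> - {x})))"

text \<open>\<integral>_S q(dy|x,a) V(y) for a [0,\<infinity>]-valued V, via the Jordan decomposition
  q = q^+ - q_x(a) \<delta>_x, integrals w.r.t. the completion (universally measurable V),
  with the conventions 0\<cdot>\<infinity> = 0 and \<infinity> - \<infinity> = \<infinity>.\<close>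
definition qint :: "('a::polish_space \<Rightarrow> 'b \<Rightarrow> 'a set \<Rightarrow> real) \<Rightarrow> 'a \<Rightarrow> 'b \<Rightarrow> ('a \<Rightarrow> ennreal) \<Rightarrow> ereal" where
  "qint q x a V =
     (let I = (\<integral>\<^sup>+ y. V y \<partial>completion (qplus q x a));
          D = ennreal (qx q x a) * V x
      in if I = \<infinity> then \<infinity> else enn2ereal I - enn2ereal D)"

definition ptilde :: "('a::polish_space \<Rightarrow> 'b \<Rightarrow> 'a set \<Rightarrow> real) \<Rightarrow> ('a \<Rightarrow> real) \<Rightarrow> 'a \<Rightarrow> 'b \<Rightarrow> 'a measure" where
  "ptilde q w x a = measure_of UNIV (sets borel) (\<lambda>\<Gamma>. ennreal (q x a \<Gamma> / w x + indicator \<Gamma> x))"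

definition hjb_term :: "('a::polish_space \<Rightarrow> 'b \<Rightarrow> 'a set \<Rightarrow> real) \<Rightarrow> ('a \<Rightarrow> 'b \<Rightarrow> real) \<Rightarrow> ('a \<Rightarrow> ennreal) \<Rightarrow> 'a \<Rightarrow> 'b \<Rightarrow> ereal" where
  "hjb_term q c V x a = ereal (c x a) * enn2ereal (V x) + qint q x a V"

definition tilde_term :: "('a::polish_space \<Rightarrow> 'b \<Rightarrow> 'a set \<Rightarrow> real) \<Rightarrow> ('a \<Rightarrow> 'b \<Rightarrow> real) \<Rightarrow> ('a \<Rightarrow> real) \<Rightarrow> ('a \<Rightarrow> ennreal) \<Rightarrow> 'a \<Rightarrow> 'b \<Rightarrow> ennreal" where
  "tilde_term q c w V x a = ennreal (w x / (w x - c x a)) * (\<integral>\<^sup>+ y. V y \<partial>completion (ptilde q w x a))"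

end

theory Submission
  imports Defs
begin

(* Writing q = q+ - q_x(a) delta_x, the kernel p~ equals (1/w) q+ + (1 - q_x(a)/w) delta_x, so for
   V(x) = v < oo
     w/(w - c) \<integral> V dp~ = v + (c v + \<integral> q V) / (w - c),
   where the weight 1/(w - c) lies in [1/w(x), 1] uniformly in a. Hence the infimum over a of the
   left-hand side is v iff the infimum of c v + \<integral> q V is 0, and then both infima are attained at
   the same actions; where V(x) = oo both sides are oo for every action. The equivalences hold
   pointwise for every [1,oo]-valued V. As V need not be measurable, \<integral>+ is only a lower integral, and the
   decomposition of p~ uses additivity and scaling facts proved directly from simple functions. *)

lemma INF_eq_iff_approx:
  fixes f :: "'b \<Rightarrow> 'c::{complete_linorder,dense_linorder}"
  shows "(INF a\<in>A. f a) = c \<longleftrightarrow> (\<forall>a\<in>A. c \<le> f a) \<and> (\<forall>y>c. \<exists>a\<in>A. f a < y)"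
proof
  assume "(INF a\<in>A. f a) = c"
  thus "(\<forall>a\<in>A. c \<le> f a) \<and> (\<forall>y>c. \<exists>a\<in>A. f a < y)"
    by (auto simp: INF_less_iff intro: INF_lower)
next
  assume H: "(\<forall>a\<in>A. c \<le> f a) \<and> (\<forall>y>c. \<exists>a\<in>A. f a < y)"
  show "(INF a\<in>A. f a) = c"
  proof (rule antisym)
    show "(INF a\<in>A. f a) \<le> c"
      by (rule dense_ge) (use H in \<open>auto simp: INF_less_iff intro: less_imp_le\<close>)
    show "c \<le> (INF a\<in>A. f a)"
      using H by (auto intro: INF_greatest)
  qed
qed

lemma ereal_divide_nonneg_iff: "0 < d \<Longrightarrow> 0 \<le> h / ereal d \<longleftrightarrow> 0 \<le> (h::ereal)"
  by (cases h) (simp_all add: zero_le_divide_iff)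

lemma INF_divide_eq_0_iff:
  fixes h :: "'b \<Rightarrow> ereal"
  assumes d: "\<And>a. 1 \<le> d a" "\<And>a. d a \<le> W"
  shows "(INF a. h a / ereal (d a)) = 0 \<longleftrightarrow> (INF a. h a) = 0"
proof -
  have pos: "0 < d a" for a using d(1)[of a] by linarith
  have W: "0 < W" using pos d(2) by (meson less_le_trans)
  have below: "h a / ereal (d a) \<le> h a" if "0 \<le> h a" for a
  proof (cases "h a")
    case (real r)
    hence "r / d a \<le> r" using that d(1)[of a] by (simp add: divide_le_eq mult_le_cancel_left1)
    thus ?thesis using real pos[of a] by simp
  qed (use that pos[of a] in auto)
  have above: "h a < ereal e" if "h a / ereal (d a) < ereal (e / W)" "0 < e" for a e
  proof (cases "h a")
    case (real r)
    hence "r / d a < e / W" using that pos[of a] by simp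
    also have "\<dots> \<le> e / d a"
      using that(2) d(2)[of a] pos[of a] by (intro divide_left_mono) auto
    finally have "r < e" using pos[of a] by (simp add: divide_less_cancel)
    thus ?thesis using real by simp
  qed (use that pos[of a] in auto)
  have approx_0_iff: "(\<forall>y>0. \<exists>a. h a / ereal (d a) < y) \<longleftrightarrow> (\<forall>y>0. \<exists>a. h a < y)"
    if nonneg: "\<And>a. 0 \<le> h a"
  proof safe
    fix y :: ereal assume "\<forall>y>0. \<exists>a. h a / ereal (d a) < y" "0 < y"
    moreover obtain e where "0 < e" "ereal e \<le> y" using \<open>0 < y\<close>
      by (cases y) (auto intro: that[of 1] that)
    moreover have "0 < ereal (e / W)" using \<open>0 < e\<close> W by simp
    ultimately obtain a where "h a / ereal (d a) < ereal (e / W)" by blast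
    thus "\<exists>a. h a < y" using above \<open>0 < e\<close> \<open>ereal e \<le> y\<close> by (meson less_le_trans)
  next
    fix y :: ereal assume "\<forall>y>0. \<exists>a. h a < y" "0 < y"
    then obtain a where "h a < y" by blast
    thus "\<exists>a. h a / ereal (d a) < y" using below[OF nonneg] by (meson le_less_trans)
  qed
  have "(INF a. h a / ereal (d a)) = 0 \<longleftrightarrow> (\<forall>a. 0 \<le> h a) \<and> (\<forall>y>0. \<exists>a. h a / ereal (d a) < y)"
    by (simp only: INF_eq_iff_approx ball_UNIV bex_UNIV ereal_divide_nonneg_iff[OF pos])
  also have "\<dots> \<longleftrightarrow> (\<forall>a. 0 \<le> h a) \<and> (\<forall>y>0. \<exists>a. h a < y)"
    using approx_0_iff by blast
  also have "\<dots> \<longleftrightarrow> (INF a. h a) = 0"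
    by (simp only: INF_eq_iff_approx ball_UNIV bex_UNIV)
  finally show ?thesis .
qed

lemma enn2ereal_INF: "enn2ereal (INF a\<in>A. t a) = (INF a\<in>A. enn2ereal (t a))"
  by (simp add: Inf_ennreal.rep_eq image_comp)

lemma INF_ereal_const_add: "(INF a\<in>A. ereal v + g a) = ereal v + (INF a\<in>A. g a)"
proof (rule antisym)
  have "(INF a\<in>A. ereal v + g a) - ereal v \<le> (INF a\<in>A. g a)"
  proof (rule INF_greatest)
    fix a assume "a \<in> A"
    hence "(INF a\<in>A. ereal v + g a) \<le> ereal v + g a" by (rule INF_lower)
    thus "(INF a\<in>A. ereal v + g a) - ereal v \<le> g a"
      by (simp add: ereal_minus_le_iff add.commute)
  qed
  thus "(INF a\<in>A. ereal v + g a) \<le> ereal v + (INF a\<in>A. g a)"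
    by (simp add: ereal_minus_le_iff add.commute)
qed (auto intro!: INF_greatest add_left_mono INF_lower)

lemma INF_offset_quotient_iff:
  fixes h :: "'b \<Rightarrow> ereal" and t :: "'b \<Rightarrow> ennreal"
  assumes d: "\<And>a. 1 \<le> d a" "\<And>a. d a \<le> W" and v: "0 \<le> v"
    and t: "\<And>a. enn2ereal (t a) = ereal v + h a / ereal (d a)"
  shows "(INF a. t a) = ennreal v \<longleftrightarrow> (INF a. h a) = 0"
    and "(INF a. h a) = 0 \<Longrightarrow> (INF a. t a) = t b \<longleftrightarrow> (INF a. h a) = h b"
proof -
  have pos: "0 < d a" for a using d(1)[of a] by linarith
  have INF_t: "enn2ereal (INF a. t a) = ereal v + (INF a. h a / ereal (d a))"
    by (simp add: enn2ereal_INF t INF_ereal_const_add)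
  have shift_eq: "ereal v + x = ereal v + y \<longleftrightarrow> x = y" for x y :: ereal
    by (cases x; cases y) auto
  show "(INF a. t a) = ennreal v \<longleftrightarrow> (INF a. h a) = 0"
  proof -
    have "(INF a. t a) = ennreal v \<longleftrightarrow> enn2ereal (INF a. t a) = ereal v + 0"
      using v by (metis add.right_neutral enn2ereal_ennreal enn2ereal_inject)
    also have "\<dots> \<longleftrightarrow> (INF a. h a / ereal (d a)) = 0"
      unfolding INF_t shift_eq ..
    finally show ?thesis using INF_divide_eq_0_iff[OF d] by simp
  qed
  assume H: "(INF a. h a) = 0"
  have "(INF a. t a) = t b \<longleftrightarrow> (INF a. h a / ereal (d a)) = h b / ereal (d b)"
    by (metis INF_t enn2ereal_inject shift_eq t)
  also have "\<dots> \<longleftrightarrow> h b = 0"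
    using H INF_divide_eq_0_iff[OF d, of h] pos[of b] by (cases "h b") auto
  finally show "(INF a. t a) = t b \<longleftrightarrow> (INF a. h a) = h b" using H by auto
qed

lemma nn_integral_superadditive:
  "integral\<^sup>N M f + integral\<^sup>N M g \<le> (\<integral>\<^sup>+x. f x + g x \<partial>M)"
proof -
  let ?S = "\<lambda>h. {s. simple_function M s \<and> s \<le> h}"
  have ne: "?S h \<noteq> {}" for h :: "_ \<Rightarrow> ennreal"
  proof -
    have "(\<lambda>_. 0) \<in> ?S h" by (auto simp: le_fun_def)
    thus ?thesis by blast
  qed
  have sum_le: "integral\<^sup>S M s + integral\<^sup>S M t \<le> (\<integral>\<^sup>+x. f x + g x \<partial>M)"
    if "s \<in> ?S f" "t \<in> ?S g" for s t
  proof -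
    have "integral\<^sup>S M s + integral\<^sup>S M t = (\<integral>\<^sup>+x. s x + t x \<partial>M)"
      using that by (simp add: nn_integral_eq_simple_integral simple_function_add)
    also have "\<dots> \<le> (\<integral>\<^sup>+x. f x + g x \<partial>M)"
      using that by (intro nn_integral_mono add_mono) (auto simp: le_fun_def)
    finally show ?thesis .
  qed
  have "integral\<^sup>N M f + integral\<^sup>N M g = (SUP s\<in>?S f. integral\<^sup>S M s + integral\<^sup>N M g)"
    unfolding nn_integral_def[of M f] by (rule ennreal_SUP_add_left[OF ne, symmetric])
  also have "\<dots> = (SUP s\<in>?S f. SUP t\<in>?S g. integral\<^sup>S M s + integral\<^sup>S M t)"
    unfolding nn_integral_def[of M g] by (simp add: ennreal_SUP_add_right[OF ne])
  also have "\<dots> \<le> (\<integral>\<^sup>+x. f x + g x \<partial>M)"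
    by (intro SUP_least sum_le)
  finally show ?thesis .
qed

lemma nn_integral_le_split:
  assumes A: "A \<in> sets M"
  shows "integral\<^sup>N M f \<le> (\<integral>\<^sup>+x. f x * indicator A x \<partial>M) + (\<integral>\<^sup>+x. f x * indicator (space M - A) x \<partial>M)"
  unfolding nn_integral_def[of M f]
proof (rule SUP_least, safe)
  fix s assume s: "simple_function M s" "s \<le> f"
  have A': "space M - A \<in> sets M" using A by auto
  have "integral\<^sup>S M s = (\<integral>\<^sup>Sx. s x * indicator A x + s x * indicator (space M - A) x \<partial>M)"
    using A sets.sets_into_space by (intro simple_integral_cong) (auto split: split_indicator)
  also have "\<dots> = (\<integral>\<^sup>+x. s x * indicator A x \<partial>M) + (\<integral>\<^sup>+x. s x * indicator (space M - A) x \<partial>M)"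
    using s(1) A A' by (simp add: nn_integral_eq_simple_integral simple_function_mult)
  also have "\<dots> \<le> (\<integral>\<^sup>+x. f x * indicator A x \<partial>M) + (\<integral>\<^sup>+x. f x * indicator (space M - A) x \<partial>M)"
    using s(2) by (intro add_mono nn_integral_mono mult_right_mono) (auto simp: le_fun_def)
  finally show "integral\<^sup>S M s \<le> \<dots>" .
qed

lemma nn_integral_split_indicator:
  assumes A: "A \<in> sets M"
  shows "integral\<^sup>N M f = (\<integral>\<^sup>+x. f x * indicator A x \<partial>M) + (\<integral>\<^sup>+x. f x * indicator (space M - A) x \<partial>M)"
proof (rule antisym[OF nn_integral_le_split[OF A]])
  have "(\<integral>\<^sup>+x. f x * indicator A x + f x * indicator (space M - A) x \<partial>M) = integral\<^sup>N M f"
    using A sets.sets_into_space by (intro nn_integral_cong) (auto split: split_indicator)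
  thus "(\<integral>\<^sup>+x. f x * indicator A x \<partial>M) + (\<integral>\<^sup>+x. f x * indicator (space M - A) x \<partial>M) \<le> integral\<^sup>N M f"
    using nn_integral_superadditive by metis
qed

lemma nn_integral_scaled_measure:
  assumes sets: "sets N = sets M" and emeasure: "\<And>B. B \<in> sets M \<Longrightarrow> emeasure N B = c * emeasure M B"
  shows "integral\<^sup>N N f = c * integral\<^sup>N M f"
proof -
  have space: "space N = space M" by (rule sets_eq_imp_space_eq[OF sets])
  have simple: "simple_function N s \<longleftrightarrow> simple_function M s" for s
    by (rule simple_function_cong_algebra[OF sets space, symmetric])
  have "integral\<^sup>S N s = c * integral\<^sup>S M s" if "simple_function M s" for s
    unfolding simple_integral_def space sum_distrib_left
  proof (intro sum.cong refl)
    fix y assume "y \<in> s ` space M"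
    hence "s -` {y} \<inter> space M \<in> sets M" using simple_functionD(2)[OF that] by blast
    thus "y * emeasure N (s -` {y} \<inter> space M) = c * (y * emeasure M (s -` {y} \<inter> space M))"
      by (simp add: emeasure ac_simps)
  qed
  thus ?thesis
    unfolding nn_integral_def simple SUP_mult_left_ennreal by (intro SUP_cong) auto
qed

lemma signed_rate_kernel_sums:
  assumes "signed_rate_kernel q" "range F \<subseteq> sets borel" "disjoint_family F"
  shows "(\<lambda>n. q x a (F n)) sums q x a (\<Union>(range F))"
  using assms unfolding signed_rate_kernel_def by blast

lemma signed_rate_kernel_empty:
  assumes q: "signed_rate_kernel q"
  shows "q x a {} = 0"
proof -
  have "(\<lambda>n::nat. q x a {}) sums q x a {}"
    using signed_rate_kernel_sums[OF q, of "\<lambda>_. {}"] by (simp add: disjoint_family_on_def)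
  thus ?thesis using summable_const_iff sums_summable by blast
qed

lemma signed_rate_kernel_Un:
  assumes q: "signed_rate_kernel q" and "A \<in> sets borel" "B \<in> sets borel" "A \<inter> B = {}"
  shows "q x a (A \<union> B) = q x a A + q x a B"
proof -
  define F where "F n = (if n = 0 then A else if n = 1 then B else {})" for n :: nat
  have "(\<lambda>n. q x a (F n)) sums q x a (A \<union> B)"
  proof -
    have "range F \<subseteq> sets borel" "disjoint_family F"
      using assms by (auto simp: F_def disjoint_family_on_def)
    moreover have "\<Union>(range F) = A \<union> B" by (auto simp: F_def split: if_splits)
    ultimately show ?thesis using signed_rate_kernel_sums[OF q, of F x a] by simp
  qed
  moreover have "(\<lambda>n. q x a (F n)) sums (\<Sum>n\<in>{0,1}. q x a (F n))"
    by (rule sums_finite) (auto simp: F_def signed_rate_kernel_empty[OF q])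
  ultimately show ?thesis by (simp add: sums_unique2 F_def)
qed

lemma signed_rate_kernel_nonneg:
  assumes "signed_rate_kernel q" "A \<in> sets borel" "x \<notin> A"
  shows "0 \<le> q x a A"
proof -
  have "0 \<le> q x a (A - {x})" using assms(1,2) unfolding signed_rate_kernel_def by blast
  thus ?thesis using assms(3) by simp
qed

lemma signed_rate_kernel_diag:
  assumes q: "signed_rate_kernel q" and A: "A \<in> sets borel" "x \<in> A"
  shows "q x a A = q x a (A - {x}) - qx q x a"
  using signed_rate_kernel_Un[OF q, of "A - {x}" "{x}" x a] A unfolding qx_def
  by (simp add: insert_absorb)

lemma qx_nonneg:
  assumes q: "signed_rate_kernel q"
  shows "0 \<le> qx q x a"
proof -
  have "q x a UNIV = 0" using q unfolding signed_rate_kernel_def by blast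
  thus ?thesis using signed_rate_kernel_diag[OF q, of UNIV x a]
      signed_rate_kernel_nonneg[OF q, of "UNIV - {x}" x a] by simp
qed

lemma sigma_algebra_borel_UNIV: "sigma_algebra UNIV (sets (borel :: 'a::topological_space measure))"
  using sets.sigma_algebra_axioms[of borel] by simp

lemma sets_measure_of_borel [simp]:
  "sets (measure_of UNIV (sets borel) \<mu>) = sets (borel :: 'a::topological_space measure)"
  by (rule sigma_algebra.sets_measure_of_eq[OF sigma_algebra_borel_UNIV])

lemma emeasure_measure_of_borel:
  fixes \<mu> :: "'a::topological_space set \<Rightarrow> real"
  assumes nonneg: "\<And>A. A \<in> sets borel \<Longrightarrow> 0 \<le> \<mu> A" and empty: "\<mu> {} = 0"
    and sums: "\<And>F. range F \<subseteq> sets borel \<Longrightarrow> disjoint_family F \<Longrightarrow> (\<lambda>n. \<mu> (F n)) sums \<mu> (\<Union>(range F))"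
    and A: "A \<in> sets borel"
  shows "emeasure (measure_of UNIV (sets borel) (\<lambda>A. ennreal (\<mu> A))) A = ennreal (\<mu> A)"
proof (rule emeasure_measure_of_sigma[OF _ _ _ A])
  show "sigma_algebra UNIV (sets borel)" by (rule sigma_algebra_borel_UNIV)
  show "positive (sets borel) (\<lambda>A. ennreal (\<mu> A))" by (simp add: positive_def empty)
  show "countably_additive (sets borel) (\<lambda>A. ennreal (\<mu> A))"
    unfolding countably_additive_def
  proof (intro allI impI)
    fix F :: "nat \<Rightarrow> 'a set" assume F: "range F \<subseteq> sets borel" "disjoint_family F"
    show "(\<Sum>n. ennreal (\<mu> (F n))) = ennreal (\<mu> (\<Union>(range F)))"
      using suminf_ennreal2[OF nonneg[OF range_subsetD[OF F(1)]] sums_summable[OF sums[OF F]]]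
        sums_unique[OF sums[OF F]] by simp
  qed
qed

lemma sets_qplus [simp]: "sets (qplus q x a) = sets borel"
  and space_qplus [simp]: "space (qplus q x a) = UNIV"
  by (simp_all add: qplus_def)

lemma sets_ptilde [simp]: "sets (ptilde q w x a) = sets borel"
  and space_ptilde [simp]: "space (ptilde q w x a) = UNIV"
  by (simp_all add: ptilde_def)

lemma emeasure_qplus:
  assumes q: "signed_rate_kernel q" and A: "A \<in> sets borel"
  shows "emeasure (qplus q x a) A = ennreal (q x a (A - {x}))"
  unfolding qplus_def
proof (rule emeasure_measure_of_borel[OF _ _ _ A])
  fix F :: "nat \<Rightarrow> 'a set" assume F: "range F \<subseteq> sets borel" "disjoint_family F"
  have "F n - {x} \<in> sets borel" for n
    by (rule sets.Diff[OF range_subsetD[OF F(1)]]) simp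
  hence "range (\<lambda>n. F n - {x}) \<subseteq> sets borel" by (simp add: image_subset_iff)
  moreover have "disjoint_family (\<lambda>n. F n - {x})"
    using F(2) unfolding disjoint_family_on_def by blast
  ultimately have "(\<lambda>n. q x a (F n - {x})) sums q x a (\<Union>n. F n - {x})"
    by (rule signed_rate_kernel_sums[OF q])
  thus "(\<lambda>n. q x a (F n - {x})) sums q x a (\<Union>(range F) - {x})" by simp
next
  fix B :: "'a set" assume "B \<in> sets borel"
  thus "0 \<le> q x a (B - {x})" by (intro signed_rate_kernel_nonneg[OF q] sets.Diff) simp_all
qed (simp add: signed_rate_kernel_empty[OF q])

(* No positivity of w x is needed: for w x = 0 the density degenerates to indicator B x, as x / 0 = 0. *)
lemma ptilde_density_nonneg:
  assumes q: "signed_rate_kernel q" and B: "B \<in> sets borel" and w: "qx q x a \<le> w x"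
  shows "0 \<le> q x a B / w x + indicator B x"
proof -
  have w_nonneg: "0 \<le> w x" using w qx_nonneg[OF q, of x a] by linarith
  show ?thesis
  proof (cases "x \<in> B")
    case True
    have "0 \<le> q x a (B - {x})" by (rule signed_rate_kernel_nonneg[OF q sets.Diff[OF B]]) simp_all
    hence "- w x \<le> q x a B" using signed_rate_kernel_diag[OF q B True, of a] w by linarith
    hence "-1 \<le> q x a B / w x" using w_nonneg by (cases "w x = 0") (simp_all add: le_divide_eq)
    thus ?thesis using True by simp
  next
    case False
    thus ?thesis using signed_rate_kernel_nonneg[OF q B False, of a] w_nonneg by simp
  qed
qed

lemma emeasure_ptilde:
  assumes q: "signed_rate_kernel q" and A: "A \<in> sets borel" and w: "qx q x a \<le> w x"
  shows "emeasure (ptilde q w x a) A = ennreal (q x a A / w x + indicator A x)"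
  unfolding ptilde_def
proof (rule emeasure_measure_of_borel[OF _ _ _ A])
  fix F :: "nat \<Rightarrow> 'a set" assume F: "range F \<subseteq> sets borel" "disjoint_family F"
  have "(\<lambda>n. q x a (F n) / w x) sums (q x a (\<Union>(range F)) / w x)"
    by (rule sums_divide[OF signed_rate_kernel_sums[OF q F]])
  moreover have "(\<lambda>n. indicator (F n) x :: real) sums indicator (\<Union>(range F)) x"
    using F(2) unfolding disjoint_family_on_def by (intro indicator_sums) blast
  ultimately show "(\<lambda>n. q x a (F n) / w x + indicator (F n) x) sums
      (q x a (\<Union>(range F)) / w x + indicator (\<Union>(range F)) x)"
    by (rule sums_add)
next
  fix B :: "'a set" assume "B \<in> sets borel"
  thus "0 \<le> q x a B / w x + indicator B x"
    by (rule ptilde_density_nonneg[where q=q and w=w and x=x and a=a, OF q _ w])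
qed (simp add: signed_rate_kernel_empty[OF q])

lemma nn_integral_indicator_singleton:
  assumes "{x} \<in> sets M"
  shows "(\<integral>\<^sup>+y. f y * indicator {x} y \<partial>M) = f x * emeasure M {x}"
proof -
  have "(\<integral>\<^sup>+y. f y * indicator {x} y \<partial>M) = (\<integral>\<^sup>+y. f x * indicator {x} y \<partial>M)"
    by (intro nn_integral_cong) (simp split: split_indicator)
  thus ?thesis using nn_integral_cmult_indicator[OF assms] by simp
qed

lemma nn_integral_ptilde:
  assumes q: "signed_rate_kernel q" and w: "qx q x a \<le> w x"
  shows "(\<integral>\<^sup>+y. V y \<partial>ptilde q w x a)
    = ennreal (1 / w x) * (\<integral>\<^sup>+y. V y \<partial>qplus q x a) + V x * ennreal (1 - qx q x a / w x)"
proof -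
  let ?P = "ptilde q w x a" and ?Q = "qplus q x a" and ?off = "UNIV - {x}"
  have w_nonneg: "0 \<le> w x" using w qx_nonneg[OF q, of x a] by linarith
  note emeasure_P = emeasure_ptilde[where q=q and w=w and x=x and a=a, OF q _ w]
  have off_diag: "(\<integral>\<^sup>+y. V y * indicator ?off y \<partial>?P) = ennreal (1 / w x) * (\<integral>\<^sup>+y. V y * indicator ?off y \<partial>?Q)"
  proof -
    have "emeasure (restrict_space ?P ?off) B = ennreal (1 / w x) * emeasure (restrict_space ?Q ?off) B"
      if "B \<in> sets (restrict_space ?Q ?off)" for B
    proof -
      have B: "B \<in> sets borel" "B \<subseteq> ?off" using that by (auto simp: sets_restrict_space_iff)
      hence "x \<notin> B" by blast
      have "emeasure (restrict_space ?P ?off) B = ennreal (q x a B / w x)"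
        using B \<open>x \<notin> B\<close> by (simp add: emeasure_restrict_space emeasure_P)
      also have "\<dots> = ennreal (1 / w x) * ennreal (q x a B)"
        using w_nonneg signed_rate_kernel_nonneg[OF q B(1) \<open>x \<notin> B\<close>, of a]
        by (simp add: ennreal_mult[symmetric])
      also have "ennreal (q x a B) = emeasure (restrict_space ?Q ?off) B"
        using B \<open>x \<notin> B\<close> by (simp add: emeasure_restrict_space emeasure_qplus[OF q])
      finally show ?thesis .
    qed
    moreover have "sets (restrict_space ?P ?off) = sets (restrict_space ?Q ?off)"
      by (rule sets_restrict_space_cong) simp
    ultimately show ?thesis
      by (simp add: nn_integral_restrict_space[symmetric] nn_integral_scaled_measure)
  qed
  have "emeasure ?P {x} = ennreal (1 - qx q x a / w x)"
    using emeasure_P[of "{x}"] by (simp add: qx_def add.commute)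
  moreover have "emeasure ?Q {x} = 0"
    using emeasure_qplus[OF q, of "{x}"] by (simp add: signed_rate_kernel_empty[OF q])
  ultimately show ?thesis
    using nn_integral_split_indicator[of "{x}" ?P V] nn_integral_split_indicator[of "{x}" ?Q V] off_diag
    by (simp add: nn_integral_indicator_singleton ac_simps)
qed

locale uniformized_rates =
  fixes q :: "'a::polish_space \<Rightarrow> 'b::polish_space \<Rightarrow> 'a set \<Rightarrow> real"
    and c :: "'a \<Rightarrow> 'b \<Rightarrow> real"
    and w :: "'a \<Rightarrow> real"
  assumes kernel: "signed_rate_kernel q"
    and c_nonneg: "\<And>x a. 0 \<le> c x a"
    and w_ge: "\<And>x a. 1 + c x a + qx q x a \<le> w x"
begin

lemma tilde_term_expand:
  "tilde_term q c w V x a = ennreal (w x / (w x - c x a)) *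
    (ennreal (1 / w x) * (\<integral>\<^sup>+y. V y \<partial>qplus q x a) + V x * ennreal (1 - qx q x a / w x))"
proof -
  have "qx q x a \<le> w x" using w_ge[of x a] c_nonneg[of x a] by linarith
  thus ?thesis unfolding tilde_term_def nn_integral_completion by (simp add: nn_integral_ptilde[OF kernel])
qed

lemma tilde_term_top:
  assumes V: "V x = \<infinity>"
  shows "tilde_term q c w V x a = \<infinity>"
proof -
  have Q: "0 \<le> qx q x a" by (rule qx_nonneg[OF kernel])
  have "0 < w x - c x a" "0 < w x" "qx q x a < w x" using w_ge[of x a] c_nonneg[of x a] Q by simp_all
  thus ?thesis unfolding tilde_term_expand V by (simp add: ennreal_mult_eq_top_iff)
qed

lemma enn2ereal_tilde_term:
  assumes V: "V x = ennreal v" "0 \<le> v"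
  shows "enn2ereal (tilde_term q c w V x a) = ereal v + hjb_term q c V x a / ereal (w x - c x a)"
proof -
  have Q: "0 \<le> qx q x a" by (rule qx_nonneg[OF kernel])
  have pos: "0 < w x - c x a" "0 < w x" "0 < 1 - qx q x a / w x"
    using w_ge[of x a] c_nonneg[of x a] Q by (simp_all add: field_simps)
  define I where "I = (\<integral>\<^sup>+y. V y \<partial>qplus q x a)"
  have hjb: "hjb_term q c V x a = ereal (c x a) * ereal v +
      (if I = \<infinity> then \<infinity> else enn2ereal I - enn2ereal (ennreal (qx q x a) * ennreal v))"
    unfolding hjb_term_def qint_def I_def nn_integral_completion Let_def V using V(2) by simp
  have tilde: "tilde_term q c w V x a = ennreal (w x / (w x - c x a)) *
      (ennreal (1 / w x) * I + ennreal v * ennreal (1 - qx q x a / w x))"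
    unfolding I_def tilde_term_expand V ..
  show ?thesis
  proof (cases "I = \<infinity>")
    case True
    thus ?thesis unfolding hjb tilde using pos by (simp add: ennreal_mult_eq_top_iff)
  next
    case False
    then obtain i where i: "I = ennreal i" "0 \<le> i" by (cases I) auto
    define r where "r = w x / (w x - c x a) * (1 / w x * i + v * (1 - qx q x a / w x))"
    have r_nonneg: "0 \<le> r" unfolding r_def using pos i(2) V(2) by simp
    have "tilde_term q c w V x a = ennreal r"
      unfolding tilde i r_def using pos i(2) V(2)
      by (simp add: ennreal_mult[symmetric] ennreal_plus[symmetric] del: ennreal_plus)
    moreover have "hjb_term q c V x a = ereal (c x a * v + i - qx q x a * v)"
      unfolding hjb using i V(2) Q by (simp add: ennreal_mult[symmetric])
    moreover have "r = v + (c x a * v + i - qx q x a * v) / (w x - c x a)"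
      unfolding r_def using pos by (simp add: field_simps)
    ultimately show ?thesis using pos r_nonneg by simp
  qed
qed

lemma tilde_denominator_bounds: "1 \<le> w x - c x a" "w x - c x a \<le> w x"
  using w_ge[of x a] c_nonneg[of x a] qx_nonneg[OF kernel, of x a] by linarith+

lemma hjb_INF_eq_0_iff_tilde_fixed_point:
  "(V x < \<infinity> \<longrightarrow> (INF a. hjb_term q c V x a) = 0) \<longleftrightarrow> V x = (INF a. tilde_term q c w V x a)"
proof (cases "V x = \<infinity>")
  case True
  thus ?thesis by (simp add: tilde_term_top)
next
  case False
  then obtain v where v: "V x = ennreal v" "0 \<le> v" by (cases "V x") auto
  show ?thesis
    using INF_offset_quotient_iff(1)[where d="\<lambda>a. w x - c x a" and h="hjb_term q c V x",
      OF tilde_denominator_bounds v(2) enn2ereal_tilde_term[where V=V and x=x, OF v]] v(1)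
    by auto
qed

lemma hjb_argmin_iff_tilde_argmin:
  assumes "V x < \<infinity> \<longrightarrow> (INF a. hjb_term q c V x a) = 0"
  shows "(V x < \<infinity> \<longrightarrow> (INF a. hjb_term q c V x a) = 0 \<and> (INF a. hjb_term q c V x a) = hjb_term q c V x b)
    \<longleftrightarrow> (INF a. tilde_term q c w V x a) = tilde_term q c w V x b"
proof (cases "V x = \<infinity>")
  case True
  thus ?thesis by (simp add: tilde_term_top)
next
  case False
  then obtain v where v: "V x = ennreal v" "0 \<le> v" by (cases "V x") auto
  show ?thesis
    using INF_offset_quotient_iff(2)[where d="\<lambda>a. w x - c x a" and h="hjb_term q c V x",
      OF tilde_denominator_bounds v(2) enn2ereal_tilde_term[where V=V and x=x, OF v]] assms v(1)
    by auto
qed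

end

theorem lemma5p8:
  fixes q :: "'a::polish_space \<Rightarrow> 'b::polish_space \<Rightarrow> 'a set \<Rightarrow> real"
    and c :: "'a \<Rightarrow> 'b \<Rightarrow> real"
    and w :: "'a \<Rightarrow> real"
  assumes q: "signed_rate_kernel q"
    and qbar: "\<And>x. bdd_above (range (qx q x))"
    and c_meas: "(\<lambda>(x,a). c x a) \<in> borel_measurable (borel \<Otimes>\<^sub>M borel)"
    and c_nonneg: "\<And>x a. c x a \<ge> 0"
    and cbar: "\<And>x. bdd_above (range (c x))"
    and w_meas: "w \<in> borel_measurable borel"
    and w_ge: "\<And>x. w x \<ge> 1 + (SUP a. c x a) + (SUP a. qx q x a)"
  shows
    "(\<forall>V. lower_semianalytic V \<and> (\<forall>x. V x \<ge> 1) \<longrightarrow>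
       ((\<forall>x. V x < \<infinity> \<longrightarrow> (INF a. hjb_term q c V x a) = 0) \<longleftrightarrow>
        (\<forall>x. V x = (INF a. tilde_term q c w V x a)))) \<and>
    (\<forall>V \<phi>. lower_semianalytic V \<and> (\<forall>x. V x \<ge> 1) \<and>
        (\<forall>x. V x < \<infinity> \<longrightarrow> (INF a. hjb_term q c V x a) = 0) \<and>
        \<phi> \<in> borel_measurable borel \<longrightarrow>
       ((\<forall>x. V x < \<infinity> \<longrightarrow>
           (INF a. hjb_term q c V x a) = 0 \<and> (INF a. hjb_term q c V x a) = hjb_term q c V x (\<phi> x)) \<longleftrightarrow>
        (\<forall>x. (INF a. tilde_term q c w V x a) = tilde_term q c w V x (\<phi> x))))"
proof -
  interpret uniformized_rates q c w
  proof
    fix x a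
    show "1 + c x a + qx q x a \<le> w x"
      using w_ge[of x] cSUP_upper[OF UNIV_I cbar, of x a] cSUP_upper[OF UNIV_I qbar, of x a] by linarith
  qed (use q c_nonneg in auto)
  show ?thesis
    using hjb_INF_eq_0_iff_tilde_fixed_point hjb_argmin_iff_tilde_argmin by blast
qed

end
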